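(* Let $C$ be a linear completely regular $[n,k,2]_q$ code with covering radius $\rho=1$, and let $n_a$ be the number of codewords at distance $1$ from any vector ${\bf x}\notin C$. Then the following are equivalent: (i) for any pair of distinct coordinate positions $i,j$ there exists a codeword of weight $2$ with support $\{i,j\}$; (ii) $n_a=n$; (iii) $|C|=q^{n-1}$; (iv) $C$ has a generator matrix of the form $[I\,|\,{\bf h}]$, where $I$ is the $(n-1)\times(n-1)$ identity matrix and ${\bf h}\in\mathbb{F}_q^{n-1}$ is a column vector of weight $n-1$; (v) the dual code of $C$ is linearly equivalent to the repetition $[n,1,n]_q$ code.
   Context: Hamming distance and weight; support of a vector = set of its nonzero coordinates; covering radius $\rho=\max_{\bf v}\min_{{\bf x}\in C}d({\bf v},{\bf x})$. $C$ is completely regular if for every vector ${\bf x}$, with $t=d({\bf x},C)$, the number of codewords at distance $i$ from ${\bf x}$ depends only on $t$ and $i$ (so $n_a$ is well defined). The repetition code is $\{(c,\dots,c):c\in\mathbb{F}_q\}$. Linear equivalence means image under ${\bf x}\mapsto{\bf x}M$ with $M$ monomial. *)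

theory Defs
  imports Main "HOL-Library.Cardinality"
begin

text \<open>Vectors of length n over a finite field 'a are modelled as functions
  nat \<Rightarrow> 'a that vanish outside the coordinate set {..<n}.\<close>

definition vecs :: "nat \<Rightarrow> (nat \<Rightarrow> 'a::zero) set" where
  "vecs n = {x. \<forall>i. n \<le> i \<longrightarrow> x i = 0}"

definition supp :: "nat \<Rightarrow> (nat \<Rightarrow> 'a::zero) \<Rightarrow> nat set" where
  "supp n x = {i. i < n \<and> x i \<noteq> 0}"

definition wt :: "nat \<Rightarrow> (nat \<Rightarrow> 'a::zero) \<Rightarrow> nat" where
  "wt n x = card (supp n x)"

definition hdist :: "nat \<Rightarrow> (nat \<Rightarrow> 'a) \<Rightarrow> (nat \<Rightarrow> 'a) \<Rightarrow> nat" where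
  "hdist n x y = card {i. i < n \<and> x i \<noteq> y i}"

definition linear_code :: "nat \<Rightarrow> (nat \<Rightarrow> 'a::field) set \<Rightarrow> bool" where
  "linear_code n C \<longleftrightarrow> C \<subseteq> vecs n \<and> (\<lambda>i. 0) \<in> C \<and>
     (\<forall>x\<in>C. \<forall>y\<in>C. (\<lambda>i. x i + y i) \<in> C) \<and>
     (\<forall>a. \<forall>x\<in>C. (\<lambda>i. a * x i) \<in> C)"

definition has_min_dist :: "nat \<Rightarrow> (nat \<Rightarrow> 'a) set \<Rightarrow> nat \<Rightarrow> bool" where
  "has_min_dist n C d \<longleftrightarrow> (\<exists>x\<in>C. \<exists>y\<in>C. x \<noteq> y \<and> hdist n x y = d) \<and>
     (\<forall>x\<in>C. \<forall>y\<in>C. x \<noteq> y \<longrightarrow> d \<le> hdist n x y)"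

definition dist_to :: "nat \<Rightarrow> (nat \<Rightarrow> 'a) \<Rightarrow> (nat \<Rightarrow> 'a) set \<Rightarrow> nat" where
  "dist_to n v C = Min (hdist n v ` C)"

definition cov_rad :: "nat \<Rightarrow> (nat \<Rightarrow> 'a::zero) set \<Rightarrow> nat" where
  "cov_rad n C = Max ((\<lambda>v. dist_to n v C) ` vecs n)"

definition completely_regular :: "nat \<Rightarrow> (nat \<Rightarrow> 'a::zero) set \<Rightarrow> bool" where
  "completely_regular n C \<longleftrightarrow>
     (\<forall>x\<in>vecs n. \<forall>y\<in>vecs n. dist_to n x C = dist_to n y C \<longrightarrow>
        (\<forall>i. card {c\<in>C. hdist n x c = i} = card {c\<in>C. hdist n y c = i}))"

definition row_space :: "nat \<Rightarrow> nat \<Rightarrow> (nat \<Rightarrow> nat \<Rightarrow> 'a::comm_semiring_1) \<Rightarrow> (nat \<Rightarrow> 'a) set" where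
  "row_space n m G = {(\<lambda>j. if j < n then (\<Sum>i<m. a i * G i j) else 0) | a. True}"

definition dual_code :: "nat \<Rightarrow> (nat \<Rightarrow> 'a::comm_semiring_1) set \<Rightarrow> (nat \<Rightarrow> 'a) set" where
  "dual_code n C = {y \<in> vecs n. \<forall>c\<in>C. (\<Sum>i<n. c i * y i) = 0}"

definition repetition_code :: "nat \<Rightarrow> (nat \<Rightarrow> 'a::zero) set" where
  "repetition_code n = {(\<lambda>i. if i < n then c else 0) | c. True}"

definition monomial_matrix :: "nat \<Rightarrow> (nat \<Rightarrow> nat \<Rightarrow> 'a::zero) \<Rightarrow> bool" where
  "monomial_matrix n M \<longleftrightarrow> (\<exists>\<sigma> lam. bij_betw \<sigma> {..<n} {..<n} \<and> (\<forall>i<n. lam i \<noteq> 0) \<and>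
     (\<forall>i<n. \<forall>j<n. M i j = (if j = \<sigma> i then lam i else 0)))"

definition vec_mat :: "nat \<Rightarrow> (nat \<Rightarrow> 'a::comm_semiring_1) \<Rightarrow> (nat \<Rightarrow> nat \<Rightarrow> 'a) \<Rightarrow> (nat \<Rightarrow> 'a)" where
  "vec_mat n x M = (\<lambda>j. if j < n then (\<Sum>i<n. x i * M i j) else 0)"

definition lin_equiv :: "nat \<Rightarrow> (nat \<Rightarrow> 'a::comm_semiring_1) set \<Rightarrow> (nat \<Rightarrow> 'a) set \<Rightarrow> bool" where
  "lin_equiv n C D \<longleftrightarrow> (\<exists>M. monomial_matrix n M \<and> (\<lambda>x. vec_mat n x M) ` C = D)"

definition cond_i :: "nat \<Rightarrow> (nat \<Rightarrow> 'a::zero) set \<Rightarrow> bool" where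
  "cond_i n C \<longleftrightarrow> (\<forall>i j. i < n \<and> j < n \<and> i \<noteq> j \<longrightarrow>
          (\<exists>c\<in>C. wt n c = 2 \<and> supp n c = {i, j}))"

definition cond_ii :: "nat \<Rightarrow> (nat \<Rightarrow> 'a::zero) set \<Rightarrow> bool" where
  "cond_ii n C \<longleftrightarrow> (\<forall>x \<in> vecs n - C. card {c\<in>C. hdist n x c = 1} = n)"

definition cond_iii :: "nat \<Rightarrow> (nat \<Rightarrow> 'a::finite) set \<Rightarrow> bool" where
  "cond_iii n C \<longleftrightarrow> card C = CARD('a) ^ (n - 1)"

definition cond_iv :: "nat \<Rightarrow> (nat \<Rightarrow> 'a::field) set \<Rightarrow> bool" where
  "cond_iv n C \<longleftrightarrow> (\<exists>h. (\<forall>i<n-1. h i \<noteq> 0) \<and>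
          C = row_space n (n - 1)
                (\<lambda>i j. if j < n - 1 then (if i = j then 1 else 0)
                       else if j = n - 1 then h i else 0))"

definition cond_v :: "nat \<Rightarrow> (nat \<Rightarrow> 'a::field) set \<Rightarrow> bool" where
  "cond_v n C \<longleftrightarrow> lin_equiv n (dual_code n C) (repetition_code n)"

end

theory Submission
  imports Defs "HOL-Library.FuncSet"
begin

text \<open>A code of minimum distance 2 contains no word of weight 1, so two codewords that agree
  outside one coordinate are equal; call a codeword supported exactly on \<open>{i, j}\<close> a pair word.
  If \<open>|C| = q\<^sup>n\<^sup>-\<^sup>1\<close>, erasing the coordinates \<open>i, j\<close> cannot be injective on \<open>C\<close>, and the
  difference of two colliding codewords is a pair word; this gives (iii) \<open>\<Rightarrow>\<close> (i). The pair
  words on \<open>{i, n-1}\<close>, normalised at \<open>i\<close>, are the rows of \<open>[I | h]\<close>; every codeword agrees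
  with the combination of these rows given by its first \<open>n-1\<close> entries, whence (i) \<open>\<Rightarrow>\<close> (iv)
  \<open>\<Rightarrow>\<close> (iii).

  The codewords at distance 1 from the unit vector \<open>e\<^sub>i\<close> are \<open>0\<close> and, for each \<open>j\<close> such that a
  pair word on \<open>{i, j}\<close> exists, the unique one normalised at \<open>i\<close>. Thus \<open>e\<^sub>i\<close> has \<open>n\<close> neighbours
  in \<open>C\<close> iff every pair \<open>{i, j}\<close> carries a pair word; since \<open>\<rho> = 1\<close> and \<open>C\<close> is completely
  regular, every non-codeword has as many neighbours as \<open>e\<^sub>0\<close>, so (i) \<open>\<Leftrightarrow>\<close> (ii).

  The dual of \<open>[I | h]\<close> is spanned by \<open>(-h, 1)\<close>, which a diagonal matrix maps to the all-one
  vector. Conversely, if a monomial matrix maps the dual onto the repetition code, then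
  \<open>y\<^sub>i \<lambda>\<^sub>i = y\<^sub>j \<lambda>\<^sub>j\<close> for every dual vector \<open>y\<close>, so \<open>\<lambda>\<^sub>i e\<^sub>i - \<lambda>\<^sub>j e\<^sub>j\<close> lies in the double dual,
  which is \<open>C\<close>.\<close>

lemma card_supported_vecs:
  assumes "finite S"
  shows "card {x::nat \<Rightarrow> 'a::{finite,zero}. \<forall>l. l \<notin> S \<longrightarrow> x l = 0} = CARD('a) ^ card S"
proof -
  let ?Z = "{x::nat \<Rightarrow> 'a. \<forall>l. l \<notin> S \<longrightarrow> x l = 0}"
  have "bij_betw (\<lambda>x. restrict x S) ?Z (PiE S (\<lambda>_. UNIV))"
    by (rule bij_betw_byWitness[where f'="\<lambda>f l. if l \<in> S then f l else 0"])
      (auto simp: fun_eq_iff)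
  then have "card ?Z = card (PiE S (\<lambda>_. UNIV :: 'a set))"
    by (rule bij_betw_same_card)
  then show ?thesis
    by (simp add: card_PiE assms)
qed

lemma finite_supported_vecs:
  "finite S \<Longrightarrow> finite {x::nat \<Rightarrow> 'a::{finite,zero}. \<forall>l. l \<notin> S \<longrightarrow> x l = 0}"
  using card_supported_vecs[of S, where 'a='a] by (intro card_ge_0_finite) simp

lemma vecs_eq_supported: "vecs n = {x. \<forall>l. l \<notin> {..<n} \<longrightarrow> x l = 0}"
  by (auto simp: vecs_def)

lemma card_vecs: "card (vecs n :: (nat \<Rightarrow> 'a::{finite,zero}) set) = CARD('a) ^ n"
  using card_supported_vecs[of "{..<n}", where 'a='a] by (simp add: vecs_eq_supported)

lemma finite_vecs: "finite (vecs n :: (nat \<Rightarrow> 'a::{finite,zero}) set)"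
  using finite_supported_vecs[of "{..<n}", where 'a='a] by (simp add: vecs_eq_supported)

lemma hdist_eq_0_imp_eq:
  assumes "x \<in> vecs n" "y \<in> vecs n" "hdist n x y = 0"
  shows "x = y"
proof
  fix i
  show "x i = y i"
  proof (cases "i < n")
    case True
    then show ?thesis
      using assms(3) by (auto simp: hdist_def)
  next
    case False
    then show ?thesis
      using assms(1,2) by (simp add: vecs_def)
  qed
qed

definition unit_vec :: "nat \<Rightarrow> nat \<Rightarrow> 'a::{zero,one}" where
  "unit_vec p = (\<lambda>l. if l = p then 1 else 0)"

lemma unit_vec_in_vecs: "p < n \<Longrightarrow> unit_vec p \<in> vecs n"
  by (simp add: unit_vec_def vecs_def)

lemma hdist_unit_vec_zero: "p < n \<Longrightarrow> hdist n (unit_vec p :: nat \<Rightarrow> 'a::zero_neq_one) (\<lambda>l. 0) = 1"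
proof -
  assume "p < n"
  then have "{l. l < n \<and> unit_vec p l \<noteq> (0::'a)} = {p}"
    by (auto simp: unit_vec_def)
  then show ?thesis
    by (simp add: hdist_def)
qed

lemma sum_mult_delta:
  assumes "finite S"
  shows "(\<Sum>i\<in>S. a i * (if i = j then 1 else 0)) = (if j \<in> S then a j else (0::'a::semiring_1))"
proof -
  have "(\<Sum>i\<in>S. a i * (if i = j then 1 else 0)) = (\<Sum>i\<in>S. if i = j then a i else 0)"
    by (rule sum.cong) auto
  then show ?thesis
    using assms by simp
qed

lemma sum_delta_mult:
  assumes "finite S"
  shows "(\<Sum>i\<in>S. (if i = j then 1 else 0) * a i) = (if j \<in> S then a j else (0::'a::semiring_1))"
proof -
  have "(\<Sum>i\<in>S. (if i = j then 1 else 0) * a i) = (\<Sum>i\<in>S. if i = j then a i else 0)"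
    by (rule sum.cong) auto
  then show ?thesis
    using assms by simp
qed

section \<open>Linear codes and duality\<close>

lemma linear_code_subset_vecs: "linear_code n C \<Longrightarrow> C \<subseteq> vecs n"
  by (simp add: linear_code_def)

lemma linear_code_zero: "linear_code n C \<Longrightarrow> (\<lambda>i. 0) \<in> C"
  by (simp add: linear_code_def)

lemma linear_code_add: "linear_code n C \<Longrightarrow> x \<in> C \<Longrightarrow> y \<in> C \<Longrightarrow> (\<lambda>i. x i + y i) \<in> C"
  by (simp add: linear_code_def)

lemma linear_code_scale: "linear_code n C \<Longrightarrow> x \<in> C \<Longrightarrow> (\<lambda>i. a * x i) \<in> C"
  by (simp add: linear_code_def)

lemma linear_code_diff:
  assumes "linear_code n C" "x \<in> C" "y \<in> C"
  shows "(\<lambda>i. x i - y i) \<in> C"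
  using linear_code_add[OF assms(1,2) linear_code_scale[OF assms(1,3), of "-1"]] by simp

lemma linear_code_sum:
  assumes "linear_code n C" "finite S" "\<forall>i\<in>S. f i \<in> C"
  shows "(\<lambda>j. \<Sum>i\<in>S. f i j) \<in> C"
  using assms(2,3)
proof (induction S rule: finite_induct)
  case empty
  then show ?case
    using linear_code_zero[OF assms(1)] by simp
next
  case (insert s S)
  then show ?case
    using linear_code_add[OF assms(1)] by simp
qed

lemma vecs_Suc_last_zero:
  assumes "x \<in> vecs (Suc m)" "x m = 0"
  shows "x \<in> vecs m"
  unfolding vecs_def
proof (intro CollectI allI impI)
  fix i
  assume "m \<le> i"
  then show "x i = 0"
    using assms by (cases "i = m") (auto simp: vecs_def)
qed

lemma linear_code_last_coord_zero:
  assumes "linear_code (Suc m) D"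
  shows "linear_code m {d\<in>D. d m = 0}"
  using assms vecs_Suc_last_zero unfolding linear_code_def by auto

lemma sum_lessThan_Suc_fun_upd:
  "(\<Sum>i<Suc m. d i * (z(m := t)) i) = (\<Sum>i<m. d i * z i) + d m * (t::'a::comm_semiring_1)"
  by simp

text \<open>One Gaussian elimination step: a separating vector for the words of \<open>D\<close> vanishing at
  \<open>m\<close> extends to one for all of \<open>D\<close>, by a last entry chosen to make it orthogonal to the
  pivot word \<open>e\<close>.\<close>

lemma separation_extend:
  fixes D :: "(nat \<Rightarrow> 'a::field) set"
  assumes lin: "linear_code (Suc m) D" and e: "e \<in> D" "e m = 1" and z: "z \<in> vecs m"
    and orth: "\<forall>d\<in>D. d m = 0 \<longrightarrow> (\<Sum>i<m. d i * z i) = 0"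
  defines "y \<equiv> z(m := - (\<Sum>i<m. e i * z i))"
  shows "y \<in> vecs (Suc m)" and "\<forall>d\<in>D. (\<Sum>i<Suc m. d i * y i) = 0"
    and "(\<Sum>i<Suc m. v i * y i) = (\<Sum>i<m. (v i - v m * e i) * z i)"
proof -
  show "y \<in> vecs (Suc m)"
    using z by (simp add: vecs_def y_def)
  have reduce: "(\<Sum>i<Suc m. v i * y i) = (\<Sum>i<m. (v i - v m * e i) * z i)" for v
    unfolding y_def sum_lessThan_Suc_fun_upd
    by (simp add: algebra_simps sum_subtractf sum_distrib_left)
  then show "(\<Sum>i<Suc m. v i * y i) = (\<Sum>i<m. (v i - v m * e i) * z i)" .
  show "\<forall>d\<in>D. (\<Sum>i<Suc m. d i * y i) = 0"
  proof
    fix d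
    assume "d \<in> D"
    then have "(\<lambda>i. d i - d m * e i) \<in> D"
      using linear_code_diff[OF lin _ linear_code_scale[OF lin e(1)]] by blast
    with orth e(2) show "(\<Sum>i<Suc m. d i * y i) = 0"
      unfolding reduce by simp
  qed
qed

lemma separation_by_pivot:
  fixes D :: "(nat \<Rightarrow> 'a::field) set"
  assumes lin: "linear_code (Suc m) D" and e: "e \<in> D" "e m = 1"
    and v: "v \<in> vecs (Suc m)" "v \<notin> D"
    and separate: "\<And>w. w \<in> vecs m \<Longrightarrow> w \<notin> {d\<in>D. d m = 0} \<Longrightarrow>
      \<exists>z\<in>vecs m. (\<forall>d\<in>{d\<in>D. d m = 0}. (\<Sum>i<m. d i * z i) = 0) \<and> (\<Sum>i<m. w i * z i) \<noteq> 0"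
  shows "\<exists>y\<in>vecs (Suc m). (\<forall>d\<in>D. (\<Sum>i<Suc m. d i * y i) = 0) \<and> (\<Sum>i<Suc m. v i * y i) \<noteq> 0"
proof -
  define w where "w = (\<lambda>i. v i - v m * e i)"
  have "e \<in> vecs (Suc m)"
    using e(1) linear_code_subset_vecs[OF lin] by blast
  then have "w \<in> vecs (Suc m)"
    using v(1) by (auto simp: vecs_def w_def)
  moreover have "w m = 0"
    using e(2) by (simp add: w_def)
  ultimately have "w \<in> vecs m"
    by (rule vecs_Suc_last_zero)
  moreover have "w \<notin> {d\<in>D. d m = 0}"
  proof
    assume "w \<in> {d\<in>D. d m = 0}"
    then have "(\<lambda>i. w i + v m * e i) \<in> D"
      using linear_code_add[OF lin _ linear_code_scale[OF lin e(1)]] by blast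
    with v(2) show False
      by (simp add: w_def)
  qed
  ultimately obtain z where z: "z \<in> vecs m" "\<forall>d\<in>{d\<in>D. d m = 0}. (\<Sum>i<m. d i * z i) = 0"
    "(\<Sum>i<m. w i * z i) \<noteq> 0"
    using separate by blast
  have "\<forall>d\<in>D. d m = 0 \<longrightarrow> (\<Sum>i<m. d i * z i) = 0"
    using z(2) by blast
  note extended = separation_extend[OF lin e z(1) this]
  have "(\<Sum>i<m. (v i - v m * e i) * z i) \<noteq> 0"
    using z(3) by (simp add: w_def)
  then have "(\<Sum>i<Suc m. v i * (z(m := - (\<Sum>i<m. e i * z i))) i) \<noteq> 0"
    by (simp only: extended(3) not_False_eq_True)
  with extended(1,2) show ?thesis
    by blast
qed

lemma linear_code_separation:
  fixes D :: "(nat \<Rightarrow> 'a::field) set"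
  assumes "linear_code m D" "v \<in> vecs m" "v \<notin> D"
  shows "\<exists>y\<in>vecs m. (\<forall>d\<in>D. (\<Sum>i<m. d i * y i) = 0) \<and> (\<Sum>i<m. v i * y i) \<noteq> 0"
  using assms
proof (induction m arbitrary: D v)
  case 0
  then have "v = (\<lambda>i. 0)"
    by (auto simp: vecs_def)
  with 0 show ?case
    by (simp add: linear_code_def)
next
  case (Suc m)
  let ?y = "unit_vec m :: nat \<Rightarrow> 'a"
  have dot_unit: "(\<Sum>i<Suc m. x i * ?y i) = x m" for x :: "nat \<Rightarrow> 'a"
    by (simp add: unit_vec_def)
  consider (pivot) e where "e \<in> D" "e m \<noteq> 0" | (last) "v m \<noteq> 0" "\<forall>d\<in>D. d m = 0"
    | (restrict) "v m = 0" "\<forall>d\<in>D. d m = 0"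
    by blast
  then show ?case
  proof cases
    case last
    then have "\<forall>d\<in>D. (\<Sum>i<Suc m. d i * ?y i) = 0" "(\<Sum>i<Suc m. v i * ?y i) \<noteq> 0"
      by (simp_all only: dot_unit) simp_all
    then show ?thesis
      using unit_vec_in_vecs[of m "Suc m"] by blast
  next
    case restrict
    then have "{d\<in>D. d m = 0} = D"
      by blast
    then have "linear_code m D"
      using linear_code_last_coord_zero[OF Suc.prems(1)] by simp
    moreover have "v \<in> vecs m"
      by (rule vecs_Suc_last_zero[OF Suc.prems(2) restrict(1)])
    ultimately obtain z where z: "z \<in> vecs m" "\<forall>d\<in>D. (\<Sum>i<m. d i * z i) = 0"
      "(\<Sum>i<m. v i * z i) \<noteq> 0"
      using Suc.IH Suc.prems(3) by blast
    then have "z m = 0"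
      by (simp add: vecs_def)
    with z show ?thesis
      by (intro bexI[of _ z]) (auto simp: vecs_def)
  next
    case pivot
    define e' where "e' = (\<lambda>i. (1 / e m) * e i)"
    have "e' \<in> D" "e' m = 1"
      using linear_code_scale[OF Suc.prems(1) pivot(1), of "1 / e m"] pivot(2)
      by (auto simp: e'_def)
    from separation_by_pivot[OF Suc.prems(1) this Suc.prems(2,3)
        Suc.IH[OF linear_code_last_coord_zero[OF Suc.prems(1)]]]
    show ?thesis .
  qed
qed

lemma dual_code_dual_code:
  fixes D :: "(nat \<Rightarrow> 'a::field) set"
  assumes "linear_code m D"
  shows "dual_code m (dual_code m D) = D"
proof
  show "D \<subseteq> dual_code m (dual_code m D)"
  proof
    fix d
    assume d: "d \<in> D"
    have "(\<Sum>i<m. y i * d i) = 0" if "y \<in> dual_code m D" for y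
    proof -
      have "(\<Sum>i<m. d i * y i) = 0"
        using that d unfolding dual_code_def by blast
      then show ?thesis
        by (simp only: mult.commute)
    qed
    moreover have "d \<in> vecs m"
      using d linear_code_subset_vecs[OF assms] by blast
    ultimately show "d \<in> dual_code m (dual_code m D)"
      unfolding dual_code_def by blast
  qed
  show "dual_code m (dual_code m D) \<subseteq> D"
  proof
    fix v
    assume v: "v \<in> dual_code m (dual_code m D)"
    show "v \<in> D"
    proof (rule ccontr)
      assume "v \<notin> D"
      then obtain y where y: "y \<in> vecs m" "\<forall>d\<in>D. (\<Sum>i<m. d i * y i) = 0"
        "(\<Sum>i<m. v i * y i) \<noteq> 0"
        using linear_code_separation[OF assms] v unfolding dual_code_def by blast
      then have "y \<in> dual_code m D"
        unfolding dual_code_def by blast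
      with v have "(\<Sum>i<m. y i * v i) = 0"
        unfolding dual_code_def by blast
      with y(3) show False
        by (simp only: mult.commute)
    qed
  qed
qed

section \<open>Codes of minimum distance 2\<close>

definition pair_word :: "(nat \<Rightarrow> 'a::zero) set \<Rightarrow> nat \<Rightarrow> nat \<Rightarrow> bool" where
  "pair_word C i j \<longleftrightarrow> (\<exists>c\<in>C. c i \<noteq> 0 \<and> c j \<noteq> 0 \<and> (\<forall>l. l \<noteq> i \<and> l \<noteq> j \<longrightarrow> c l = 0))"

definition normal_pair_word :: "nat \<Rightarrow> nat \<Rightarrow> (nat \<Rightarrow> 'a::{zero,one}) \<Rightarrow> bool" where
  "normal_pair_word i j c \<longleftrightarrow> c i = 1 \<and> c j \<noteq> 0 \<and> (\<forall>l. l \<noteq> i \<and> l \<noteq> j \<longrightarrow> c l = 0)"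

lemma pair_word_if_normal:
  assumes "c \<in> C" "normal_pair_word i j (c :: nat \<Rightarrow> 'a::zero_neq_one)"
  shows "pair_word C i j"
proof -
  have "c i \<noteq> 0" "c j \<noteq> 0" "\<forall>l. l \<noteq> i \<and> l \<noteq> j \<longrightarrow> c l = 0"
    using assms(2) unfolding normal_pair_word_def by simp_all
  with assms(1) show ?thesis
    unfolding pair_word_def by blast
qed

lemma normal_pair_word_partner_eq:
  "normal_pair_word i j c \<Longrightarrow> normal_pair_word i p c \<Longrightarrow> j \<noteq> i \<Longrightarrow> p \<noteq> i \<Longrightarrow> p = j"
  unfolding normal_pair_word_def by blast

lemma hdist_unit_vec_normal_pair_word:
  assumes "normal_pair_word i j c" "j < n" "j \<noteq> i"
  shows "hdist n (unit_vec i) c = 1"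
proof -
  have "{l. l < n \<and> unit_vec i l \<noteq> c l} = {j}"
    using assms unfolding normal_pair_word_def by (auto simp: unit_vec_def)
  then show ?thesis
    by (simp add: hdist_def)
qed

definition partner :: "nat \<Rightarrow> nat \<Rightarrow> (nat \<Rightarrow> 'a::{zero,one}) \<Rightarrow> nat" where
  "partner n i c = (SOME j. j < n \<and> j \<noteq> i \<and> normal_pair_word i j c)"

lemma partner_eq:
  "j < n \<Longrightarrow> j \<noteq> i \<Longrightarrow> normal_pair_word i j c \<Longrightarrow> partner n i c = j"
  unfolding partner_def by (rule some_equality) (auto dest: normal_pair_word_partner_eq)

lemma cond_i_iff_pair_word:
  assumes "C \<subseteq> vecs n"
  shows "cond_i n C \<longleftrightarrow> (\<forall>i j. i < n \<and> j < n \<and> i \<noteq> j \<longrightarrow> pair_word C i j)"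
proof -
  have "(\<exists>c\<in>C. wt n c = 2 \<and> supp n c = {i, j}) \<longleftrightarrow> pair_word C i j"
    if "i < n" "j < n" "i \<noteq> j" for i j
  proof
    assume "\<exists>c\<in>C. wt n c = 2 \<and> supp n c = {i, j}"
    then obtain c where c: "c \<in> C" "supp n c = {i, j}"
      by blast
    have "i \<in> supp n c" "j \<in> supp n c"
      using c(2) by simp_all
    then have "c i \<noteq> 0" "c j \<noteq> 0"
      by (simp_all add: supp_def)
    moreover have "c l = 0" if "l \<noteq> i" "l \<noteq> j" for l
    proof (cases "l < n")
      case True
      have "l \<notin> supp n c"
        using c(2) that by simp
      with True show ?thesis
        by (simp add: supp_def)
    next
      case False
      have "c \<in> vecs n"
        using c(1) assms by blast
      with False show ?thesis
        by (simp add: vecs_def)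
    qed
    ultimately show "pair_word C i j"
      using c(1) unfolding pair_word_def by blast
  next
    assume "pair_word C i j"
    then obtain c where c: "c \<in> C" "c i \<noteq> 0" "c j \<noteq> 0" "\<forall>l. l \<noteq> i \<and> l \<noteq> j \<longrightarrow> c l = 0"
      unfolding pair_word_def by blast
    have "supp n c = {i, j}"
    proof (rule set_eqI)
      fix l
      show "l \<in> supp n c \<longleftrightarrow> l \<in> {i, j}"
        using that c(2-4) by (cases "l = i \<or> l = j") (auto simp: supp_def)
    qed
    moreover from this have "wt n c = 2"
      using that(3) by (simp add: wt_def)
    ultimately show "\<exists>c\<in>C. wt n c = 2 \<and> supp n c = {i, j}"
      using c(1) by blast
  qed
  then show ?thesis
    unfolding cond_i_def by blast
qed

locale min_dist_2_code =
  fixes n :: nat and C :: "(nat \<Rightarrow> 'a::{finite,field}) set"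
  assumes linear: "linear_code n C" and min_dist: "has_min_dist n C 2"
begin

lemma code_subset_vecs: "C \<subseteq> vecs n"
  using linear by (rule linear_code_subset_vecs)

lemma code_eq_0_beyond: "c \<in> C \<Longrightarrow> n \<le> l \<Longrightarrow> c l = 0"
  using code_subset_vecs by (auto simp: vecs_def)

lemma finite_code: "finite C"
  using code_subset_vecs finite_vecs by (rule finite_subset)

lemma zero_in_code: "(\<lambda>i. 0) \<in> C"
  using linear by (rule linear_code_zero)

lemma length_ge_2: "2 \<le> n"
proof -
  obtain x y where "x \<in> C" "y \<in> C" "hdist n x y = 2"
    using min_dist unfolding has_min_dist_def by blast
  moreover have "hdist n x y \<le> card {..<n}"
    unfolding hdist_def by (rule card_mono) auto
  ultimately show ?thesis
    by simp
qed

lemma eq_zero_if_supported_at: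
  assumes x: "x \<in> C" and supp: "\<forall>l. l \<noteq> p \<longrightarrow> x l = 0"
  shows "x = (\<lambda>i. 0)"
proof (rule ccontr)
  assume "x \<noteq> (\<lambda>i. 0)"
  then have "2 \<le> hdist n x (\<lambda>i. 0)"
    using min_dist x zero_in_code unfolding has_min_dist_def by blast
  moreover have "hdist n x (\<lambda>i. 0) \<le> card {p}"
    unfolding hdist_def by (rule card_mono) (use supp in auto)
  ultimately show False
    by simp
qed

lemma eq_if_agree_off:
  assumes "x \<in> C" "y \<in> C" "\<forall>l. l \<noteq> p \<longrightarrow> x l = y l"
  shows "x = y"
  using eq_zero_if_supported_at[OF linear_code_diff[OF linear assms(1,2)], of p] assms(3)
  by (simp add: fun_eq_iff)

lemma unit_vec_notin_code: "unit_vec p \<notin> C"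
proof
  assume "unit_vec p \<in> C"
  then have "unit_vec p = (\<lambda>i. 0 :: 'a)"
    by (rule eq_zero_if_supported_at) (simp add: unit_vec_def)
  from fun_cong[OF this, of p] show False
    by (simp add: unit_vec_def)
qed

lemma pair_word_if_supported:
  assumes d: "d \<in> C" "d \<noteq> (\<lambda>l. 0)" and supp: "\<forall>l. l \<noteq> i \<and> l \<noteq> j \<longrightarrow> d l = 0"
  shows "pair_word C i j"
proof -
  have "d i \<noteq> 0"
  proof
    assume "d i = 0"
    then have "d = (\<lambda>l. 0)"
      using supp by (intro eq_zero_if_supported_at[OF d(1), of j]) auto
    with d(2) show False ..
  qed
  moreover have "d j \<noteq> 0"
  proof
    assume "d j = 0"
    then have "d = (\<lambda>l. 0)"
      using supp by (intro eq_zero_if_supported_at[OF d(1), of i]) auto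
    with d(2) show False ..
  qed
  ultimately show ?thesis
    using d(1) supp unfolding pair_word_def by blast
qed

lemma pair_word_normalised:
  assumes "pair_word C i j"
  obtains c where "c \<in> C" "normal_pair_word i j c"
proof -
  obtain c where c: "c \<in> C" "c i \<noteq> 0" "c j \<noteq> 0" "\<forall>l. l \<noteq> i \<and> l \<noteq> j \<longrightarrow> c l = 0"
    using assms unfolding pair_word_def by blast
  show ?thesis
    using that[OF linear_code_scale[OF linear c(1), of "1 / c i"]] c(2-4)
    unfolding normal_pair_word_def by simp
qed

lemma normal_pair_word_unique:
  assumes "c \<in> C" "c' \<in> C" "normal_pair_word i j c" "normal_pair_word i j c'"
  shows "c = c'"
proof -
  have "\<forall>l. l \<noteq> j \<longrightarrow> c l = c' l"
  proof (intro allI impI)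
    fix l
    assume "l \<noteq> j"
    then show "c l = c' l"
      using assms(3,4) unfolding normal_pair_word_def by (cases "l = i") simp_all
  qed
  then show ?thesis
    using eq_if_agree_off[OF assms(1,2)] by blast
qed

lemma pair_word_if_card_gt:
  assumes card: "CARD('a) ^ (n - 2) < card C" and ij: "i < n" "j < n" "i \<noteq> j"
  shows "pair_word C i j"
proof -
  define erase where "erase c = (\<lambda>l. if l = i \<or> l = j then 0 else c l)" for c :: "nat \<Rightarrow> 'a"
  let ?S = "{..<n} - {i, j}"
  let ?Z = "{x::nat \<Rightarrow> 'a. \<forall>l. l \<notin> ?S \<longrightarrow> x l = 0}"
  have "\<not> inj_on erase C"
  proof
    assume "inj_on erase C"
    moreover have "erase ` C \<subseteq> ?Z"
      using code_eq_0_beyond by (auto simp: erase_def)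
    ultimately have "card C \<le> card ?Z"
      using finite_supported_vecs[of ?S, where 'a='a] by (intro card_inj_on_le) auto
    moreover have "card ?Z = CARD('a) ^ (n - 2)"
      using card_supported_vecs[of ?S, where 'a='a] ij by (simp add: card_Diff_subset numeral_2_eq_2)
    ultimately show False
      using card by simp
  qed
  then obtain c c' where c: "c \<in> C" "c' \<in> C" "erase c = erase c'" "c \<noteq> c'"
    unfolding inj_on_def by blast
  have "(\<lambda>l. c l - c' l) \<noteq> (\<lambda>l. 0)"
    using c(4) by (auto simp: fun_eq_iff)
  moreover have "\<forall>l. l \<noteq> i \<and> l \<noteq> j \<longrightarrow> c l - c' l = 0"
  proof (intro allI impI)
    fix l
    assume "l \<noteq> i \<and> l \<noteq> j"
    then show "c l - c' l = 0"
      using fun_cong[OF c(3), of l] by (simp add: erase_def)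
  qed
  ultimately show ?thesis
    by (rule pair_word_if_supported[OF linear_code_diff[OF linear c(1,2)]])
qed

end

section \<open>Systematic generator matrices\<close>

definition systematic_word :: "nat \<Rightarrow> (nat \<Rightarrow> 'a::field) \<Rightarrow> (nat \<Rightarrow> 'a) \<Rightarrow> nat \<Rightarrow> 'a" where
  "systematic_word n h a =
     (\<lambda>j. if j < n - 1 then a j else if j = n - 1 then (\<Sum>i<n - 1. a i * h i) else 0)"

lemma cond_iv_iff_systematic:
  "cond_iv n C \<longleftrightarrow> (\<exists>h. (\<forall>i<n - 1. h i \<noteq> 0) \<and> C = range (systematic_word n h))"
proof -
  have "row_space n (n - 1) (\<lambda>i j. if j < n - 1 then (if i = j then 1 else 0)
          else if j = n - 1 then h i else 0) = range (systematic_word n h)" for h :: "nat \<Rightarrow> 'a"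
  proof -
    have "(\<lambda>j. if j < n then \<Sum>i<n - 1. a i * (if j < n - 1 then (if i = j then 1 else 0)
            else if j = n - 1 then h i else 0) else 0) = systematic_word n h a" for a
      by (auto simp: systematic_word_def fun_eq_iff sum_mult_delta)
    then show ?thesis
      unfolding row_space_def by auto
  qed
  then show ?thesis
    unfolding cond_iv_def by simp
qed

lemma systematic_word_restrict:
  "systematic_word n h a = systematic_word n h (\<lambda>i. if i < n - 1 then a i else 0)"
  unfolding systematic_word_def by (intro ext) (auto intro!: sum.cong)

lemma card_range_systematic_word:
  "card (range (systematic_word n h) :: (nat \<Rightarrow> 'a::{finite,field}) set) = CARD('a) ^ (n - 1)"
proof -
  have "range (systematic_word n h) = systematic_word n h ` vecs (n - 1)"
  proof
    show "range (systematic_word n h) \<subseteq> systematic_word n h ` vecs (n - 1)"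
    proof
      fix x
      assume "x \<in> range (systematic_word n h)"
      then obtain a where "x = systematic_word n h a"
        by blast
      then have "x = systematic_word n h (\<lambda>i. if i < n - 1 then a i else 0)"
        by (rule trans[OF _ systematic_word_restrict])
      moreover have "(\<lambda>i. if i < n - 1 then a i else 0) \<in> vecs (n - 1)"
        by (simp add: vecs_def)
      ultimately show "x \<in> systematic_word n h ` vecs (n - 1)"
        by (rule image_eqI)
    qed
  qed blast
  moreover have "inj_on (systematic_word n h) (vecs (n - 1))"
  proof
    fix a b
    assume a: "a \<in> vecs (n - 1)" and b: "b \<in> vecs (n - 1)"
      and eq: "systematic_word n h a = systematic_word n h b"
    show "a = b"
    proof
      fix j
      show "a j = b j"
      proof (cases "j < n - 1")
        case True
        then show ?thesis
          using fun_cong[OF eq, of j] by (simp add: systematic_word_def)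
      next
        case False
        then show ?thesis
          using a b by (simp add: vecs_def)
      qed
    qed
  qed
  ultimately show ?thesis
    by (simp add: card_image card_vecs)
qed

lemma systematic_word_in_code:
  assumes lin: "linear_code n C"
    and rows: "\<forall>i<n - 1. (\<lambda>l. if i = l then 1 else if l = n - 1 then h i else 0) \<in> C"
  shows "systematic_word n h a \<in> C"
proof -
  have entry: "systematic_word n h a j
      = (\<Sum>i<n - 1. a i * (if i = j then 1 else if j = n - 1 then h i else 0))" for j
  proof (cases "j < n - 1")
    case True
    then have "(if i = j then 1 else if j = n - 1 then h i else 0) = (if i = j then 1 else 0)" for i
      by simp
    with True show ?thesis
      by (simp add: systematic_word_def sum_mult_delta)
  next
    case False
    then have "(if i = j then 1 else if j = n - 1 then h i else 0) = (if j = n - 1 then h i else 0)"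
      if "i < n - 1" for i
      using that by auto
    with False show ?thesis
      by (simp add: systematic_word_def)
  qed
  have "(\<lambda>j. \<Sum>i<n - 1. a i * (if i = j then 1 else if j = n - 1 then h i else 0)) \<in> C"
    using rows by (intro linear_code_sum[OF lin] ballI linear_code_scale[OF lin]) auto
  moreover have "systematic_word n h a
      = (\<lambda>j. \<Sum>i<n - 1. a i * (if i = j then 1 else if j = n - 1 then h i else 0))"
    by (rule ext) (rule entry)
  ultimately show ?thesis
    by simp
qed

lemma cond_iii_if_cond_iv: "cond_iv n (C :: (nat \<Rightarrow> 'a::{finite,field}) set) \<Longrightarrow> cond_iii n C"
  unfolding cond_iv_iff_systematic cond_iii_def by (auto simp: card_range_systematic_word)

lemma inner_systematic_word:
  assumes "0 < n"
  shows "(\<Sum>l<n. systematic_word n h a l * y l) = (\<Sum>l<n - 1. a l * (y l + h l * y (n - 1)))"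
proof -
  have "{..<n} = insert (n - 1) {..<n - 1}"
    using assms by auto
  then have "(\<Sum>l<n. systematic_word n h a l * y l)
      = (\<Sum>i<n - 1. a i * h i) * y (n - 1) + (\<Sum>l<n - 1. a l * y l)"
    by (simp add: systematic_word_def)
  then show ?thesis
    by (simp add: algebra_simps sum.distrib sum_distrib_left sum_distrib_right)
qed

lemma dual_code_systematic:
  assumes n: "0 < n"
  shows "dual_code n (range (systematic_word n h)) =
    range (\<lambda>t l. if l < n - 1 then - (h l * t) else if l = n - 1 then t else 0)"
proof
  show "dual_code n (range (systematic_word n h)) \<subseteq>
      range (\<lambda>t l. if l < n - 1 then - (h l * t) else if l = n - 1 then t else 0)"
  proof
    fix y
    assume y: "y \<in> dual_code n (range (systematic_word n h))"
    have "y i = - (h i * y (n - 1))" if i: "i < n - 1" for i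
    proof -
      have "0 = (\<Sum>l<n. systematic_word n h (unit_vec i) l * y l)"
        using y unfolding dual_code_def by auto
      also have "\<dots> = (\<Sum>l<n - 1. unit_vec i l * (y l + h l * y (n - 1)))"
        by (rule inner_systematic_word[OF n])
      also have "\<dots> = y i + h i * y (n - 1)"
        using i by (simp add: unit_vec_def sum_delta_mult)
      finally show ?thesis
        by (simp add: eq_neg_iff_add_eq_0)
    qed
    moreover have "y l = 0" if "n - 1 < l" for l
      using y that unfolding dual_code_def vecs_def by auto
    ultimately have "y = (\<lambda>l. if l < n - 1 then - (h l * y (n - 1))
        else if l = n - 1 then y (n - 1) else 0)"
      by (auto simp: fun_eq_iff)
    then show "y \<in> range (\<lambda>t l. if l < n - 1 then - (h l * t) else if l = n - 1 then t else 0)"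
      by (rule range_eqI)
  qed
  show "range (\<lambda>t l. if l < n - 1 then - (h l * t) else if l = n - 1 then t else 0)
      \<subseteq> dual_code n (range (systematic_word n h))"
    using n by (auto simp: dual_code_def vecs_def inner_systematic_word)
qed

section \<open>Monomial equivalence\<close>

lemma vec_mat_monomial:
  assumes \<sigma>: "bij_betw \<sigma> {..<n} {..<n}"
    and M: "\<forall>i<n. \<forall>j<n. M i j = (if j = \<sigma> i then lam i else 0)" and i: "i < n"
  shows "vec_mat n y M (\<sigma> i) = y i * lam i"
proof -
  have \<sigma>i: "\<sigma> i < n"
    using \<sigma> i by (auto simp: bij_betw_def)
  then have "vec_mat n y M (\<sigma> i) = (\<Sum>l<n. y l * M l (\<sigma> i))"
    by (simp add: vec_mat_def)
  also have "\<dots> = (\<Sum>l<n. if l = i then y l * lam l else 0)"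
  proof (rule sum.cong)
    fix l
    assume l: "l \<in> {..<n}"
    have "\<sigma> i = \<sigma> l \<longleftrightarrow> l = i"
      using \<sigma> l i by (auto simp: bij_betw_def dest: inj_onD)
    then show "y l * M l (\<sigma> i) = (if l = i then y l * lam l else 0)"
      using M l \<sigma>i by auto
  qed simp
  also have "\<dots> = y i * lam i"
    using i by simp
  finally show ?thesis .
qed

lemma repetition_preimage_balanced:
  assumes \<sigma>: "bij_betw \<sigma> {..<n} {..<n}"
    and M: "\<forall>i<n. \<forall>j<n. M i j = (if j = \<sigma> i then lam i else 0)"
    and y: "vec_mat n y M \<in> repetition_code n" and ij: "i < n" "j < n"
  shows "y i * lam i = y j * lam j"
proof -
  obtain t where t: "vec_mat n y M = (\<lambda>l. if l < n then t else 0)"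
    using y unfolding repetition_code_def by blast
  have "y l * lam l = t" if l: "l < n" for l
  proof -
    have "\<sigma> l < n"
      using \<sigma> l by (auto simp: bij_betw_def)
    then show ?thesis
      using vec_mat_monomial[OF \<sigma> M l, of y] fun_cong[OF t, of "\<sigma> l"] by simp
  qed
  then show ?thesis
    using ij by simp
qed

lemma cond_v_if_cond_iv:
  assumes n: "0 < n" and iv: "cond_iv n C"
  shows "cond_v n C"
proof -
  obtain h where h: "\<forall>i<n - 1. h i \<noteq> 0" and C: "C = range (systematic_word n h)"
    using iv unfolding cond_iv_iff_systematic by blast
  define lam where "lam l = (if l < n - 1 then - (1 / h l) else 1)" for l
  define M where "M i j = (if j = i then lam i else 0)" for i j
  have vec_mat_M: "vec_mat n y M l = y l * lam l" if "l < n" for y l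
    using vec_mat_monomial[of id n M lam, OF bij_betw_id _ that] by (simp add: M_def)
  have "monomial_matrix n M"
    unfolding monomial_matrix_def
    by (intro exI[of _ id] exI[of _ lam]) (auto simp: M_def lam_def h)
  moreover have "(\<lambda>x. vec_mat n x M) ` dual_code n C = repetition_code n"
  proof -
    have "vec_mat n (\<lambda>l. if l < n - 1 then - (h l * t) else if l = n - 1 then t else 0) M
        = (\<lambda>i. if i < n then t else 0)" for t
      using h by (auto simp: fun_eq_iff vec_mat_M lam_def) (auto simp: vec_mat_def)
    then have "(\<lambda>x. vec_mat n x M) ` dual_code n C = range (\<lambda>t i. if i < n then t else 0)"
      unfolding C dual_code_systematic[OF n] image_image by simp
    moreover have "repetition_code n = range (\<lambda>t i. if i < n then t else (0::'a))"
      by (simp add: repetition_code_def full_SetCompr_eq)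
    ultimately show ?thesis
      by simp
  qed
  ultimately show ?thesis
    unfolding cond_v_def lin_equiv_def by blast
qed

lemma pair_word_if_dual_balanced:
  assumes lin: "linear_code n C" and ij: "i < n" "j < n" "i \<noteq> j"
    and lam: "lam i \<noteq> 0" "lam j \<noteq> 0"
    and balanced: "\<forall>y\<in>dual_code n C. y i * lam i = y j * lam j"
  shows "pair_word C i j"
proof -
  define c where "c l = (if l = i then lam i else if l = j then - lam j else 0)" for l
  have "(\<Sum>l<n. y l * c l) = 0" if "y \<in> dual_code n C" for y
  proof -
    have "(\<Sum>l<n. y l * c l) = (\<Sum>l\<in>{i, j}. y l * c l)"
      by (rule sum.mono_neutral_right) (use ij in \<open>auto simp: c_def\<close>)
    also have "\<dots> = 0"
      using ij balanced that by (simp add: c_def)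
    finally show ?thesis .
  qed
  then have "c \<in> dual_code n (dual_code n C)"
    using ij by (auto simp: dual_code_def vecs_def c_def)
  then have "c \<in> C"
    unfolding dual_code_dual_code[OF lin] .
  moreover have "c i \<noteq> 0" "c j \<noteq> 0" "\<forall>l. l \<noteq> i \<and> l \<noteq> j \<longrightarrow> c l = 0"
    using ij lam by (auto simp: c_def)
  ultimately show ?thesis
    unfolding pair_word_def by blast
qed

lemma cond_i_if_cond_v:
  assumes lin: "linear_code n C" and v: "cond_v n C"
  shows "cond_i n C"
proof -
  obtain M where "monomial_matrix n M"
    and im: "(\<lambda>x. vec_mat n x M) ` dual_code n C = repetition_code n"
    using v unfolding cond_v_def lin_equiv_def by blast
  then obtain \<sigma> lam where \<sigma>: "bij_betw \<sigma> {..<n} {..<n}" and lam: "\<forall>i<n. lam i \<noteq> 0"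
    and M: "\<forall>i<n. \<forall>j<n. M i j = (if j = \<sigma> i then lam i else 0)"
    unfolding monomial_matrix_def by blast
  have "pair_word C i j" if ij: "i < n" "j < n" "i \<noteq> j" for i j
  proof (rule pair_word_if_dual_balanced[OF lin ij])
    show "lam i \<noteq> 0" "lam j \<noteq> 0"
      using lam ij by simp_all
    show "\<forall>y\<in>dual_code n C. y i * lam i = y j * lam j"
      using im ij by (blast intro: repetition_preimage_balanced[OF \<sigma> M])
  qed
  then show ?thesis
    unfolding cond_i_iff_pair_word[OF linear_code_subset_vecs[OF lin]] by blast
qed

context min_dist_2_code
begin

lemma cond_i_if_cond_iii:
  assumes "cond_iii n C"
  shows "cond_i n C"
proof -
  have "card {0::'a, 1} \<le> CARD('a)"
    by (rule card_mono) simp_all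
  then have "CARD('a) ^ (n - 2) < CARD('a) ^ (n - 1)"
    using length_ge_2 by (intro power_strict_increasing) auto
  then have "CARD('a) ^ (n - 2) < card C"
    using assms unfolding cond_iii_def by simp
  then show ?thesis
    using pair_word_if_card_gt unfolding cond_i_iff_pair_word[OF code_subset_vecs] by blast
qed

lemma cond_iv_if_cond_i:
  assumes "cond_i n C"
  shows "cond_iv n C"
proof -
  have "\<exists>b. b \<noteq> 0 \<and> (\<lambda>l. if i = l then 1 else if l = n - 1 then b else 0) \<in> C"
    if i: "i < n - 1" for i
  proof -
    have "i < n" "n - 1 < n" "i \<noteq> n - 1"
      using i length_ge_2 by simp_all
    then have "pair_word C i (n - 1)"
      using assms unfolding cond_i_iff_pair_word[OF code_subset_vecs] by blast
    then obtain c where "c \<in> C" "normal_pair_word i (n - 1) c"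
      by (rule pair_word_normalised)
    then have c: "c \<in> C" "c i = 1" "c (n - 1) \<noteq> 0" "\<forall>l. l \<noteq> i \<and> l \<noteq> n - 1 \<longrightarrow> c l = 0"
      unfolding normal_pair_word_def by simp_all
    moreover have "c = (\<lambda>l. if i = l then 1 else if l = n - 1 then c (n - 1) else 0)"
      using c i by (auto simp: fun_eq_iff)
    ultimately show ?thesis
      by metis
  qed
  then obtain h where h: "\<And>i. i < n - 1 \<Longrightarrow>
      h i \<noteq> 0 \<and> (\<lambda>l. if i = l then 1 else if l = n - 1 then h i else 0) \<in> C"
    by metis
  have rows: "systematic_word n h a \<in> C" for a
    using h by (intro systematic_word_in_code[OF linear] allI impI) blast
  have "c = systematic_word n h c" if c: "c \<in> C" for c
  proof -
    have "c l = 0" if "n \<le> l" for l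
      using code_eq_0_beyond[OF c that] .
    then have "\<forall>l. l \<noteq> n - 1 \<longrightarrow> c l = systematic_word n h c l"
      by (auto simp: systematic_word_def)
    then show ?thesis
      using eq_if_agree_off[OF c rows] by blast
  qed
  then have "C = range (systematic_word n h)"
    using rows by blast
  with h show ?thesis
    unfolding cond_iv_iff_systematic by blast
qed

lemma normal_pair_word_if_neighbour:
  assumes c: "c \<in> C" "c \<noteq> (\<lambda>l. 0)" "hdist n (unit_vec i) c = 1" and i: "i < n"
  obtains j where "j < n" "j \<noteq> i" "normal_pair_word i j c"
proof -
  obtain j where j: "{l. l < n \<and> unit_vec i l \<noteq> c l} = {j}"
    using c(3) unfolding hdist_def by (rule card_1_singletonE)
  then have "j \<in> {l. l < n \<and> unit_vec i l \<noteq> c l}"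
    by simp
  then have jn: "j < n" "unit_vec i j \<noteq> c j"
    by simp_all
  have agree: "c l = unit_vec i l" if "l \<noteq> j" for l
  proof (cases "l < n")
    case True
    have "l \<notin> {l. l < n \<and> unit_vec i l \<noteq> c l}"
      using j that by simp
    with True show ?thesis
      by simp
  next
    case False
    then show ?thesis
      using code_eq_0_beyond[OF c(1)] i by (simp add: unit_vec_def)
  qed
  have "j \<noteq> i"
  proof
    assume "j = i"
    then have "c = (\<lambda>l. 0)"
      using agree by (intro eq_zero_if_supported_at[OF c(1), of i]) (simp add: unit_vec_def)
    with c(2) show False ..
  qed
  moreover have "c i = 1"
    using agree[of i] \<open>j \<noteq> i\<close> by (simp add: unit_vec_def)
  moreover have "c j \<noteq> 0"
    using jn(2) \<open>j \<noteq> i\<close> by (simp add: unit_vec_def)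
  moreover have "\<forall>l. l \<noteq> i \<and> l \<noteq> j \<longrightarrow> c l = 0"
    using agree by (simp add: unit_vec_def)
  ultimately have "normal_pair_word i j c"
    unfolding normal_pair_word_def by blast
  with \<open>j \<noteq> i\<close> jn(1) show ?thesis
    using that by blast
qed

lemma bij_betw_partner:
  assumes i: "i < n"
  shows "bij_betw (partner n i) ({c\<in>C. hdist n (unit_vec i) c = 1} - {\<lambda>l. 0})
    {j. j < n \<and> j \<noteq> i \<and> pair_word C i j}"
proof (rule bij_betw_imageI)
  let ?N = "{c\<in>C. hdist n (unit_vec i) c = 1} - {\<lambda>l. 0}"
  have N: "c \<in> C \<and> partner n i c < n \<and> partner n i c \<noteq> i \<and> normal_pair_word i (partner n i c) c"
    if "c \<in> ?N" for c
  proof -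
    have c: "c \<in> C" "c \<noteq> (\<lambda>l. 0)" "hdist n (unit_vec i) c = 1"
      using that by auto
    obtain j where "j < n" "j \<noteq> i" "normal_pair_word i j c"
      by (rule normal_pair_word_if_neighbour[OF c i])
    with c(1) show ?thesis
      by (simp add: partner_eq)
  qed
  show "inj_on (partner n i) ?N"
  proof (rule inj_onI)
    fix c c'
    assume c: "c \<in> ?N" and c': "c' \<in> ?N" and eq: "partner n i c = partner n i c'"
    show "c = c'"
      using N[OF c] N[OF c'] eq normal_pair_word_unique[of c c' i "partner n i c"] by simp
  qed
  show "partner n i ` ?N = {j. j < n \<and> j \<noteq> i \<and> pair_word C i j}"
  proof
    show "partner n i ` ?N \<subseteq> {j. j < n \<and> j \<noteq> i \<and> pair_word C i j}"
    proof
      fix j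
      assume "j \<in> partner n i ` ?N"
      then obtain c where c: "c \<in> ?N" "j = partner n i c"
        by blast
      then show "j \<in> {j. j < n \<and> j \<noteq> i \<and> pair_word C i j}"
        using N[OF c(1)] pair_word_if_normal[of c C i j] by simp
    qed
    show "{j. j < n \<and> j \<noteq> i \<and> pair_word C i j} \<subseteq> partner n i ` ?N"
    proof
      fix j
      assume j: "j \<in> {j. j < n \<and> j \<noteq> i \<and> pair_word C i j}"
      then obtain c where c: "c \<in> C" "normal_pair_word i j c"
        using pair_word_normalised by blast
      have "c \<noteq> (\<lambda>l. 0)"
      proof
        assume "c = (\<lambda>l. 0)"
        with c(2) show False
          unfolding normal_pair_word_def by simp
      qed
      moreover have "hdist n (unit_vec i) c = 1"
        using hdist_unit_vec_normal_pair_word c(2) j by blast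
      ultimately have "c \<in> ?N"
        using c(1) by blast
      moreover have "partner n i c = j"
        using partner_eq c(2) j by blast
      ultimately show "j \<in> partner n i ` ?N"
        by blast
    qed
  qed
qed

lemma card_neighbours_unit_vec:
  assumes i: "i < n"
  shows "card {c\<in>C. hdist n (unit_vec i) c = 1} = Suc (card {j. j < n \<and> j \<noteq> i \<and> pair_word C i j})"
proof -
  have "card {c\<in>C. hdist n (unit_vec i) c = 1} = Suc (card ({c\<in>C. hdist n (unit_vec i) c = 1} - {\<lambda>l. 0}))"
    using finite_code zero_in_code hdist_unit_vec_zero[OF i]
    by (intro card_Suc_Diff1[symmetric]) auto
  then show ?thesis
    using bij_betw_same_card[OF bij_betw_partner[OF i]] by simp
qed

lemma card_neighbours_unit_vec_eq_length:
  assumes i: "i < n"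
  shows "card {c\<in>C. hdist n (unit_vec i) c = 1} = n \<longleftrightarrow> (\<forall>j<n. j \<noteq> i \<longrightarrow> pair_word C i j)"
proof -
  let ?P = "{j. j < n \<and> j \<noteq> i \<and> pair_word C i j}"
  have sub: "?P \<subseteq> {..<n} - {i}"
    by blast
  have card: "card ({..<n} - {i}) = n - 1"
    using i by simp
  have "Suc (card ?P) = n \<longleftrightarrow> card ?P = n - 1"
    using i by arith
  also have "\<dots> \<longleftrightarrow> ?P = {..<n} - {i}"
  proof
    assume "card ?P = n - 1"
    with sub card show "?P = {..<n} - {i}"
      by (intro card_subset_eq) simp_all
  next
    assume "?P = {..<n} - {i}"
    with card show "card ?P = n - 1"
      by simp
  qed
  also have "\<dots> \<longleftrightarrow> (\<forall>j<n. j \<noteq> i \<longrightarrow> pair_word C i j)"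
    by blast
  finally show ?thesis
    unfolding card_neighbours_unit_vec[OF i] .
qed

lemma dist_to_eq_1:
  assumes rho: "cov_rad n C = 1" and x: "x \<in> vecs n" "x \<notin> C"
  shows "dist_to n x C = 1"
proof -
  have "dist_to n x C \<le> cov_rad n C"
    unfolding cov_rad_def using x(1) finite_vecs by (intro Max_ge) auto
  moreover have "dist_to n x C \<noteq> 0"
  proof
    assume "dist_to n x C = 0"
    moreover have "dist_to n x C \<in> hdist n x ` C"
      unfolding dist_to_def using finite_code zero_in_code by (intro Min_in) auto
    ultimately obtain c where c: "c \<in> C" "hdist n x c = 0"
      by auto
    then have "x = c"
      using hdist_eq_0_imp_eq[OF x(1)] code_subset_vecs by blast
    with x(2) c(1) show False
      by simp
  qed
  ultimately show ?thesis
    using rho by simp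
qed

lemma cond_i_if_cond_ii:
  assumes "cond_ii n C"
  shows "cond_i n C"
  unfolding cond_i_iff_pair_word[OF code_subset_vecs]
proof (intro allI impI)
  fix i j
  assume ij: "i < n \<and> j < n \<and> i \<noteq> j"
  then have "unit_vec i \<in> vecs n - C"
    using unit_vec_in_vecs unit_vec_notin_code by blast
  then have "card {c\<in>C. hdist n (unit_vec i) c = 1} = n"
    using assms unfolding cond_ii_def by blast
  then show "pair_word C i j"
    using card_neighbours_unit_vec_eq_length[of i] ij by blast
qed

lemma cond_ii_if_cond_i:
  assumes rho: "cov_rad n C = 1" and cr: "completely_regular n C" and "cond_i n C"
  shows "cond_ii n C"
  unfolding cond_ii_def
proof
  fix x
  assume "x \<in> vecs n - C"
  then have x: "x \<in> vecs n" "x \<notin> C"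
    by simp_all
  have n: "0 < n"
    using length_ge_2 by simp
  let ?e = "unit_vec 0 :: nat \<Rightarrow> 'a"
  have e0: "?e \<in> vecs n" "?e \<notin> C"
    using unit_vec_in_vecs[OF n] unit_vec_notin_code by auto
  have "dist_to n x C = dist_to n ?e C"
    using dist_to_eq_1[OF rho] x e0 by simp
  then have "card {c\<in>C. hdist n x c = 1} = card {c\<in>C. hdist n ?e c = 1}"
    using cr[unfolded completely_regular_def, rule_format, of x ?e 1] x(1) e0(1)
    by blast
  also have "\<dots> = n"
  proof -
    have "\<forall>j<n. j \<noteq> 0 \<longrightarrow> pair_word C 0 j"
      using assms(3) n unfolding cond_i_iff_pair_word[OF code_subset_vecs] by blast
    then show ?thesis
      using card_neighbours_unit_vec_eq_length[OF n] by blast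
  qed
  finally show "card {c\<in>C. hdist n x c = 1} = n" .
qed

end

theorem lemma3p5:
  fixes C :: "(nat \<Rightarrow> 'a::{finite,field}) set" and n k :: nat
  assumes lin: "linear_code n C"
    and dim: "card C = CARD('a) ^ k"
    and md: "has_min_dist n C 2"
    and cr: "completely_regular n C"
    and rho: "cov_rad n C = 1"
  shows "(cond_i n C \<longleftrightarrow> cond_ii n C) \<and> (cond_ii n C \<longleftrightarrow> cond_iii n C) \<and>
         (cond_iii n C \<longleftrightarrow> cond_iv n C) \<and> (cond_iv n C \<longleftrightarrow> cond_v n C)"
proof -
  interpret min_dist_2_code n C
    using lin md by unfold_locales
  have "0 < n"
    using length_ge_2 by simp
  have "cond_i n C \<longleftrightarrow> cond_ii n C"
    using cond_i_if_cond_ii cond_ii_if_cond_i[OF rho cr] by blast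
  moreover have "cond_i n C \<longrightarrow> cond_iv n C" "cond_iv n C \<longrightarrow> cond_iii n C"
    "cond_iii n C \<longrightarrow> cond_i n C"
    using cond_iv_if_cond_i cond_iii_if_cond_iv cond_i_if_cond_iii by blast+
  moreover have "cond_iv n C \<longrightarrow> cond_v n C" "cond_v n C \<longrightarrow> cond_i n C"
    using cond_v_if_cond_iv[OF \<open>0 < n\<close>] cond_i_if_cond_v[OF lin] by blast+
  ultimately show ?thesis
    by blast
qed

end
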